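(* Let $1\le n<L$ and all rates positive. For $i\in\{1,\dots,n\}$ write $f_i(p_1,\dots,p_n,q_1,\dots,q_n)=\langle\eta_{i,1}\rangle$, the stationary density of $\Box$'s at site $(i,1)$ as a function of the rates. Then for $1\le i\le n$, $$f_i(p_2,p_3,\dots,p_n,p_1,\;q_2,q_3,\dots,q_n,q_1)=f_{i+1}(p_1,\dots,p_n,q_1,\dots,q_n),$$ i.e. $\langle\eta_{i,1}\rangle$ with $p_j\to p_{j+1}$, $q_j\to q_{j+1}$ for all $j$ (indices mod $n$) equals $\langle\eta_{i+1,1}\rangle$, where $f_{n+1}=f_1$.
   Context: Particle labels/rows are taken modulo $n$, positions/columns modulo $L$. $\Omega_{L,n}$ is the set of words $w_1\cdots w_L$ on the ring $\mathbb{Z}/L\mathbb{Z}$ over the alphabet $\{\bullet_1,\dots,\bullet_n,\Box_1,\dots,\Box_n\}$ in which each $\bullet_k$ occurs exactly once, the $\bullet_1,\dots,\bullet_n$ appear in this cyclic order, and the remaining $L-n$ letters are arbitrary $\Box_i$'s. Transitions (displayed segments are consecutive positions, rest unchanged, $C$ a possibly empty word in the $\Box$-letters): (T1) $\bullet_k\Box_i \to \Box_i\bullet_k$ at rate $p_k$, if $i\neq k$; (T2) $\bullet_{k-1}\,C\,\bullet_k\Box_k \to \bullet_{k-1}\Box_{k-1}\,C\,\bullet_k$ at rate $p_k$; (T3) $\Box_i\bullet_k \to \bullet_k\Box_i$ at rate $q_k$, if $i\neq k$; (T4) $\Box_k\bullet_k\,C\,\bullet_{k+1} \to \bullet_k\,C\,\Box_{k+1}\bullet_{k+1}$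 at rate $q_k$. $\mathcal{A}_{L,n}$ is the set of arrays with $n$ rows and $L$ columns, entries in $\{\cdot,\bullet,\Box\}$, identified with $\Omega_{L,n}$ via: column $j$ has a $\bullet$ (resp. $\Box$) in row $k$ and $\cdot$ elsewhere iff $w_j=\bullet_k$ (resp. $\Box_k$); it carries the transported dynamics, irreducible when all rates are positive. $\eta_{i,j}$ is the indicator that site (row $i$, column $j$) is occupied by a $\Box$, and $\langle\cdot\rangle$ denotes expectation under the unique stationary distribution. *)

theory Defs
  imports Main "HOL.Real"
begin

text \<open>Particle labels / rows are 0-based here:
  label k < n stands for the paper's label k+1. A word w_1 ... w_L is a list of
  length L; list index t stands for position t+1 (so index 0 is column 1).\<close>
datatype letter = Bul nat | Box nat

fun is_box :: "letter \<Rightarrow> bool" where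
  "is_box (Box _) = True" | "is_box (Bul _) = False"

definition Omega :: "nat \<Rightarrow> nat \<Rightarrow> letter list set" where
  "Omega L n = {w. length w = L
     \<and> set w \<subseteq> {Bul k | k. k < n} \<union> {Box i | i. i < n}
     \<and> (\<forall>k<n. length (filter (\<lambda>x. x = Bul k) w) = 1)
     \<and> (\<exists>r. [k. Bul k \<leftarrow> w] = rotate r [0..<n])}"

definition prv :: "nat \<Rightarrow> nat \<Rightarrow> nat" where "prv n k = (k + n - 1) mod n"
definition nxt :: "nat \<Rightarrow> nat \<Rightarrow> nat" where "nxt n k = (k + 1) mod n"

text \<open>Displayed segments are
  consecutive positions on the ring: after rotating the word so that the segment
  starts at the beginning, the word splits as segment @ rest.\<close>
definition T1 :: "nat \<Rightarrow> nat \<Rightarrow> letter list \<Rightarrow> letter list \<Rightarrow> bool" where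
  "T1 n k w w' = (\<exists>r i D. i \<noteq> k \<and>
      rotate r w = [Bul k, Box i] @ D \<and> rotate r w' = [Box i, Bul k] @ D)"

definition T2 :: "nat \<Rightarrow> nat \<Rightarrow> letter list \<Rightarrow> letter list \<Rightarrow> bool" where
  "T2 n k w w' = (\<exists>r C D. (\<forall>c\<in>set C. is_box c) \<and>
      rotate r w = [Bul (prv n k)] @ C @ [Bul k, Box k] @ D \<and>
      rotate r w' = [Bul (prv n k), Box (prv n k)] @ C @ [Bul k] @ D)"

definition T3 :: "nat \<Rightarrow> nat \<Rightarrow> letter list \<Rightarrow> letter list \<Rightarrow> bool" where
  "T3 n k w w' = (\<exists>r i D. i \<noteq> k \<and>
      rotate r w = [Box i, Bul k] @ D \<and> rotate r w' = [Bul k, Box i] @ D)"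

definition T4 :: "nat \<Rightarrow> nat \<Rightarrow> letter list \<Rightarrow> letter list \<Rightarrow> bool" where
  "T4 n k w w' = (\<exists>r C D. (\<forall>c\<in>set C. is_box c) \<and>
      rotate r w = [Box k, Bul k] @ C @ [Bul (nxt n k)] @ D \<and>
      rotate r w' = [Bul k] @ C @ [Box (nxt n k), Bul (nxt n k)] @ D)"

definition rate :: "nat \<Rightarrow> (nat \<Rightarrow> real) \<Rightarrow> (nat \<Rightarrow> real) \<Rightarrow> letter list \<Rightarrow> letter list \<Rightarrow> real" where
  "rate n p q w w' = (\<Sum>k<n.
      (if T1 n k w w' then p k else 0) + (if T2 n k w w' then p k else 0)
    + (if T3 n k w w' then q k else 0) + (if T4 n k w w' then q k else 0))"

definition stationary :: "nat \<Rightarrow> nat \<Rightarrow> (nat \<Rightarrow> real) \<Rightarrow> (nat \<Rightarrow> real) \<Rightarrow> (letter list \<Rightarrow> real) \<Rightarrow> bool" where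
  "stationary L n p q \<pi> =
     ((\<forall>w. w \<notin> Omega L n \<longrightarrow> \<pi> w = 0)
      \<and> (\<forall>w\<in>Omega L n. 0 \<le> \<pi> w)
      \<and> (\<Sum>w\<in>Omega L n. \<pi> w) = 1
      \<and> (\<forall>w\<in>Omega L n. (\<Sum>w'\<in>Omega L n. \<pi> w' * rate n p q w' w)
                         = \<pi> w * (\<Sum>w'\<in>Omega L n. rate n p q w w')))"

definition stat_dist :: "nat \<Rightarrow> nat \<Rightarrow> (nat \<Rightarrow> real) \<Rightarrow> (nat \<Rightarrow> real) \<Rightarrow> letter list \<Rightarrow> real" where
  "stat_dist L n p q = (THE \<pi>. stationary L n p q \<pi>)"

text \<open>f_{i}(p,q) = <eta_{i,1}>: stationary probability that column 1 (list index 0)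
  holds a Box in row i (0-based label i).\<close>
definition box_density :: "nat \<Rightarrow> nat \<Rightarrow> (nat \<Rightarrow> real) \<Rightarrow> (nat \<Rightarrow> real) \<Rightarrow> nat \<Rightarrow> real" where
  "box_density L n p q i = (\<Sum>w\<in>{w\<in>Omega L n. w ! 0 = Box i}. stat_dist L n p q w)"

end

theory Submission
  imports Defs "Jordan_Normal_Form.Determinant"
begin

text \<open>Relabelling every particle and box \<open>k\<close> as \<open>k + 1 mod n\<close> maps \<open>\<Omega>\<^sub>L\<^sub>,\<^sub>n\<close>
  bijectively onto itself and turns each transition of particle \<open>k\<close> into a transition of the
  same type of particle \<open>k + 1\<close>. So it conjugates the chain with rates \<open>p\<^sub>j\<^sub>+\<^sub>1, q\<^sub>j\<^sub>+\<^sub>1\<close>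
  to the chain with rates \<open>p\<^sub>j, q\<^sub>j\<close>, carries stationary distributions of the latter to
  the former, and maps the event "box of row \<open>i\<close> in column 1" to "box of row \<open>i + 1\<close> in
  column 1". It remains to see that the stationary distribution is unique. This holds for
  every finite chain in which all states reach one state \<open>c\<close>: the generator has a nonzero
  left kernel vector since its rows sum to zero, the absolute value of such a vector is again
  in the kernel, and a nonnegative kernel vector vanishing at \<open>c\<close> vanishes everywhere.
  For \<open>n \<ge> 2\<close>, the moves T3 and T4 alone lead from every configuration to the one in
  which all boxes carry label 1 and sit between particles \<open>n\<close> and 1.\<close>

section \<open>Stationary distributions of finite chains\<close>

definition balanced :: "'a set \<Rightarrow> ('a \<Rightarrow> 'a \<Rightarrow> real) \<Rightarrow> ('a \<Rightarrow> real) \<Rightarrow> bool" where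
  "balanced S R u \<longleftrightarrow> (\<forall>y\<in>S. (\<Sum>x\<in>S. u x * R x y) = u y * (\<Sum>x\<in>S. R y x))"

lemma balanced_cong: "(\<And>x. x \<in> S \<Longrightarrow> u x = v x) \<Longrightarrow> balanced S R u \<longleftrightarrow> balanced S R v"
  unfolding balanced_def by simp

lemma balanced_scale: "balanced S R u \<Longrightarrow> balanced S R (\<lambda>x. c * u x)"
  unfolding balanced_def by (simp add: mult.assoc sum_distrib_left[symmetric])

lemma balanced_diff: "balanced S R u \<Longrightarrow> balanced S R v \<Longrightarrow> balanced S R (\<lambda>x. u x - v x)"
  unfolding balanced_def by (simp add: left_diff_distrib sum_subtractf)

text \<open>The triangle inequality makes the inflow of \<open>\<bar>u\<bar>\<close> at least its outflow at every
  state; as total inflow and total outflow agree, equality holds everywhere.\<close>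

lemma balanced_abs:
  assumes "finite S" and R: "\<And>x y. x \<in> S \<Longrightarrow> y \<in> S \<Longrightarrow> 0 \<le> R x y" and u: "balanced S R u"
  shows "balanced S R (\<lambda>x. \<bar>u x\<bar>)"
proof -
  define excess where "excess y = (\<Sum>x\<in>S. \<bar>u x\<bar> * R x y) - \<bar>u y\<bar> * (\<Sum>x\<in>S. R y x)" for y
  have excess_nonneg: "0 \<le> excess y" if y: "y \<in> S" for y
  proof -
    have "\<bar>u y\<bar> * (\<Sum>x\<in>S. R y x) = \<bar>\<Sum>x\<in>S. u x * R x y\<bar>"
      using u y R by (simp add: balanced_def abs_mult sum_nonneg)
    also have "\<dots> \<le> (\<Sum>x\<in>S. \<bar>u x\<bar> * R x y)"
      using sum_abs[of "\<lambda>x. u x * R x y" S] R y by (simp add: abs_mult)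
    finally show ?thesis unfolding excess_def by simp
  qed
  have "(\<Sum>y\<in>S. \<Sum>x\<in>S. \<bar>u x\<bar> * R x y) = (\<Sum>x\<in>S. \<bar>u x\<bar> * (\<Sum>y\<in>S. R x y))"
    by (subst sum.swap) (simp add: sum_distrib_left)
  then have "(\<Sum>y\<in>S. excess y) = 0"
    unfolding excess_def by (simp add: sum_subtractf)
  then have "\<forall>y\<in>S. excess y = 0"
    using sum_nonneg_eq_0_iff[OF \<open>finite S\<close>] excess_nonneg by blast
  then show ?thesis unfolding balanced_def excess_def by simp
qed

lemma balanced_reindex:
  assumes "bij_betw \<phi> S S" and "balanced S R u"
  shows "balanced S (\<lambda>x y. R (\<phi> x) (\<phi> y)) (u \<circ> \<phi>)"
  unfolding balanced_def
proof
  fix y assume "y \<in> S"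
  then have "\<phi> y \<in> S" using assms(1) bij_betwE by blast
  have reindex: "(\<Sum>x\<in>S. g (\<phi> x)) = (\<Sum>x\<in>S. g x)" for g :: "_ \<Rightarrow> real"
    using sum.reindex_bij_betw[OF assms(1)] .
  show "(\<Sum>x\<in>S. (u \<circ> \<phi>) x * R (\<phi> x) (\<phi> y)) = (u \<circ> \<phi>) y * (\<Sum>x\<in>S. R (\<phi> y) (\<phi> x))"
    using assms(2) \<open>\<phi> y \<in> S\<close>
      reindex[of "\<lambda>x. u x * R x (\<phi> y)"] reindex[of "R (\<phi> y)"] by (simp add: balanced_def)
qed

abbreviation positive_rate :: "'a set \<Rightarrow> ('a \<Rightarrow> 'a \<Rightarrow> real) \<Rightarrow> 'a \<Rightarrow> 'a \<Rightarrow> bool" where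
  "positive_rate S R x y \<equiv> x \<in> S \<and> y \<in> S \<and> 0 < R x y"

lemma balanced_nonneg_vanishes_upstream:
  assumes "finite S" and R: "\<And>x y. x \<in> S \<Longrightarrow> y \<in> S \<Longrightarrow> 0 \<le> R x y"
    and u: "balanced S R u" "\<And>x. x \<in> S \<Longrightarrow> 0 \<le> u x"
    and "(positive_rate S R)\<^sup>*\<^sup>* x c" and "c \<in> S" "u c = 0"
  shows "u x = 0"
  using \<open>(positive_rate S R)\<^sup>*\<^sup>* x c\<close>
proof (induction rule: converse_rtranclp_induct)
  case base
  show ?case using \<open>u c = 0\<close> .
next
  case (step x y)
  have "(\<Sum>z\<in>S. u z * R z y) = 0"
    using u(1) step by (simp add: balanced_def)
  moreover have "\<forall>z\<in>S. 0 \<le> u z * R z y"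
    using u(2) R step(1) by simp
  ultimately have "u x * R x y = 0"
    using sum_nonneg_eq_0_iff[OF \<open>finite S\<close>, of "\<lambda>z. u z * R z y"] step(1) by auto
  then show ?case using step(1) by simp
qed

lemma mat_kernel_nontrivial_if_column_sums_zero:
  fixes A :: "real mat"
  assumes A: "A \<in> carrier_mat N N" and "0 < N" and col: "\<And>j. j < N \<Longrightarrow> (\<Sum>i<N. A $$ (i, j)) = 0"
  shows "\<exists>v \<in> carrier_vec N. v \<noteq> 0\<^sub>v N \<and> A *\<^sub>v v = 0\<^sub>v N"
proof -
  let ?one = "vec N (\<lambda>_. 1) :: real vec"
  have "transpose_mat A *\<^sub>v ?one = 0\<^sub>v N"
    using A col by (intro eq_vecI) (auto simp: scalar_prod_def atLeast0LessThan)
  moreover have "?one \<noteq> 0\<^sub>v N"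
    using \<open>0 < N\<close> by (metis index_vec index_zero_vec(1) zero_neq_one)
  moreover have "transpose_mat A \<in> carrier_mat N N" using A by simp
  ultimately have "det (transpose_mat A) = 0"
    using det_0_iff_vec_prod_zero_field[of "transpose_mat A" N] by (metis vec_carrier)
  then have "det A = 0" using det_transpose[OF A] by simp
  then show ?thesis using det_0_iff_vec_prod_zero_field[OF A] by blast
qed

lemma exists_nonzero_balanced:
  assumes "finite S" and "S \<noteq> {}"
  shows "\<exists>u. (\<exists>x\<in>S. u x \<noteq> 0) \<and> balanced S R u"
proof -
  define N where "N = card S"
  obtain e where e: "bij_betw e {..<N} S"
    using ex_bij_betw_nat_finite[OF \<open>finite S\<close>] unfolding N_def atLeast0LessThan by blast
  have "0 < N" using assms card_gt_0_iff unfolding N_def by blast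
  define out where "out x = (\<Sum>y\<in>S. R x y)" for x
  \<comment> \<open>the transposed generator, in the enumeration \<open>e\<close> of \<open>S\<close>\<close>
  define A where "A = mat N N (\<lambda>(i, j). R (e j) (e i) - (if i = j then out (e i) else 0))"
  have reindex: "(\<Sum>x\<in>S. g x) = (\<Sum>i<N. g (e i))" for g :: "_ \<Rightarrow> real"
    by (rule sum.reindex_bij_betw[OF e, symmetric])
  have "(\<Sum>i<N. A $$ (i, j)) = 0" if "j < N" for j
    using that by (simp add: A_def sum_subtractf out_def reindex)
  then obtain v where v: "v \<in> carrier_vec N" "v \<noteq> 0\<^sub>v N" "A *\<^sub>v v = 0\<^sub>v N"
    using mat_kernel_nontrivial_if_column_sums_zero[of A N] \<open>0 < N\<close> by (auto simp: A_def)
  define u where "u x = v $ the_inv_into {..<N} e x" for x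
  have u_e: "u (e i) = v $ i" if "i < N" for i
    using that the_inv_into_f_f[OF bij_betw_imp_inj_on[OF e]] by (simp add: u_def)
  have "\<exists>i<N. v $ i \<noteq> 0"
    using v(1,2) by (metis carrier_vecD eq_vecI index_zero_vec)
  then have "\<exists>x\<in>S. u x \<noteq> 0"
    using u_e bij_betwE[OF e] by force
  moreover have "balanced S R u"
    unfolding balanced_def
  proof
    fix y assume "y \<in> S"
    then obtain i where i: "i < N" "y = e i"
      using e by (metis bij_betw_iff_bijections lessThan_iff)
    have "0 = (A *\<^sub>v v) $ i" using v(3) i by simp
    also have "\<dots> = (\<Sum>j<N. R (e j) (e i) * v $ j) - out (e i) * v $ i"
      using i v(1) by (simp add: A_def scalar_prod_def atLeast0LessThan left_diff_distrib
          sum_subtractf if_distrib[of "\<lambda>a. a * _"] cong: if_cong)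
    finally show "(\<Sum>x\<in>S. u x * R x y) = u y * (\<Sum>x\<in>S. R y x)"
      using i by (simp add: reindex u_e out_def mult.commute)
  qed
  ultimately show ?thesis by blast
qed

definition stationary_on :: "'a set \<Rightarrow> ('a \<Rightarrow> 'a \<Rightarrow> real) \<Rightarrow> ('a \<Rightarrow> real) \<Rightarrow> bool" where
  "stationary_on S R \<pi> \<longleftrightarrow> (\<forall>x. x \<notin> S \<longrightarrow> \<pi> x = 0) \<and> (\<forall>x\<in>S. 0 \<le> \<pi> x) \<and> sum \<pi> S = 1 \<and> balanced S R \<pi>"

lemma stationary_on_reindex:
  assumes "bij_betw \<phi> S S" and "\<And>x. x \<notin> S \<Longrightarrow> \<phi> x \<notin> S" and "stationary_on S R \<pi>"
  shows "stationary_on S (\<lambda>x y. R (\<phi> x) (\<phi> y)) (\<pi> \<circ> \<phi>)"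
  using assms balanced_reindex[OF assms(1)] sum.reindex_bij_betw[OF assms(1), of \<pi>] bij_betwE[OF assms(1)]
  unfolding stationary_on_def by auto

locale unichain =
  fixes S :: "'a set" and R :: "'a \<Rightarrow> 'a \<Rightarrow> real" and c :: 'a
  assumes finite_S: "finite S" and rates_nonneg: "\<And>x y. x \<in> S \<Longrightarrow> y \<in> S \<Longrightarrow> 0 \<le> R x y"
    and c_in_S: "c \<in> S" and reaches_c: "\<And>x. x \<in> S \<Longrightarrow> (positive_rate S R)\<^sup>*\<^sup>* x c"
begin

lemma balanced_nonneg_vanishes:
  assumes "balanced S R u" "\<And>x. x \<in> S \<Longrightarrow> 0 \<le> u x" "u c = 0" "x \<in> S"
  shows "u x = 0"
  using balanced_nonneg_vanishes_upstream[of S R, OF finite_S rates_nonneg assms(1,2) reaches_c c_in_S]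
    assms(3,4) by blast

lemma stationary_on_pos_at_c:
  assumes "stationary_on S R \<pi>"
  shows "\<pi> c \<noteq> 0"
proof
  assume "\<pi> c = 0"
  with assms have "\<forall>x\<in>S. \<pi> x = 0"
    using balanced_nonneg_vanishes unfolding stationary_on_def by blast
  then show False using assms unfolding stationary_on_def by simp
qed

lemma stationary_on_unique:
  assumes \<pi>: "stationary_on S R \<pi>" and \<sigma>: "stationary_on S R \<sigma>"
  shows "\<pi> = \<sigma>"
proof -
  define a where "a = \<pi> c / \<sigma> c"
  define v where "v x = \<pi> x - a * \<sigma> x" for x
  have "balanced S R (\<lambda>x. a * \<sigma> x)"
    using \<sigma> by (simp add: stationary_on_def balanced_scale)
  then have "balanced S R v"
    using \<pi> unfolding v_def stationary_on_def by (simp add: balanced_diff)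
  then have "balanced S R (\<lambda>x. \<bar>v x\<bar>)"
    using balanced_abs[of S R, OF finite_S rates_nonneg] by blast
  moreover have "v c = 0"
    using stationary_on_pos_at_c[OF \<sigma>] by (simp add: v_def a_def)
  ultimately have proportional: "\<pi> x = a * \<sigma> x" if "x \<in> S" for x
    using balanced_nonneg_vanishes[of "\<lambda>x. \<bar>v x\<bar>" x] that by (simp add: v_def)
  have "sum \<pi> S = a * sum \<sigma> S"
    unfolding sum_distrib_left by (rule sum.cong) (simp_all add: proportional)
  then have "a = 1"
    using \<pi> \<sigma> by (simp add: stationary_on_def)
  show ?thesis
  proof
    fix x
    show "\<pi> x = \<sigma> x"
      using \<pi> \<sigma> proportional[of x] \<open>a = 1\<close> by (cases "x \<in> S") (simp_all add: stationary_on_def)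
  qed
qed

lemma stationary_on_exists: "\<exists>\<pi>. stationary_on S R \<pi>"
proof -
  obtain u where u: "\<exists>x\<in>S. u x \<noteq> 0" "balanced S R u"
    using exists_nonzero_balanced[OF finite_S] c_in_S by blast
  define Z where "Z = (\<Sum>x\<in>S. \<bar>u x\<bar>)"
  have "0 < Z"
    using u(1) finite_S by (auto simp: Z_def intro: sum_pos2)
  define \<pi> where "\<pi> x = (if x \<in> S then \<bar>u x\<bar> / Z else 0)" for x
  have "balanced S R (\<lambda>x. (1 / Z) * \<bar>u x\<bar>)"
    by (intro balanced_scale balanced_abs[of S R, OF finite_S rates_nonneg u(2)])
  then have "balanced S R \<pi>"
    by (rule balanced_cong[THEN iffD1, rotated]) (simp add: \<pi>_def)
  moreover have "sum \<pi> S = 1"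
    using \<open>0 < Z\<close> by (simp add: \<pi>_def Z_def sum_divide_distrib[symmetric])
  ultimately have "stationary_on S R \<pi>"
    using \<open>0 < Z\<close> by (simp add: stationary_on_def \<pi>_def)
  then show ?thesis by blast
qed

lemma ex1_stationary_on: "\<exists>!\<pi>. stationary_on S R \<pi>"
  using stationary_on_exists stationary_on_unique by blast

end

section \<open>Words on a ring\<close>

lemma count_list_distinct: "distinct xs \<Longrightarrow> count_list xs x = (if x \<in> set xs then 1 else 0)"
  by (induction xs) auto

lemma concat_map_rotate: "\<exists>m. concat (map f (rotate s xs)) = rotate m (concat (map f xs))"
proof -
  define k where "k = s mod length xs"
  have "concat (map f (rotate s xs)) = concat (map f (drop k xs)) @ concat (map f (take k xs))"
    by (simp add: rotate_drop_take k_def)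
  also have "\<dots> = rotate (length (concat (map f (take k xs)))) (concat (map f xs))"
    by (metis append_take_drop_id concat_append map_append rotate_append)
  finally show ?thesis ..
qed

lemma rotate_cancel: "length xs = N \<Longrightarrow> rotate (N - s mod N) (rotate s xs) = xs"
proof (cases "N = 0")
  case False
  assume "length xs = N"
  have "s mod N < N" "N * (s div N) + s mod N = s"
    using False by simp_all
  then have "N - s mod N + s = N + N * (s div N)"
    by linarith
  then show ?thesis using \<open>length xs = N\<close> by (simp add: rotate_rotate)
qed simp

definition cyclic_replace :: "'a list \<Rightarrow> 'a list \<Rightarrow> 'a list \<Rightarrow> 'a list \<Rightarrow> bool" where
  "cyclic_replace A B w w' \<longleftrightarrow> (\<exists>r D. rotate r w = A @ D \<and> rotate r w' = B @ D)"

lemma cyclic_replace_prefix: "cyclic_replace A B (A @ D) (B @ D)"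
  unfolding cyclic_replace_def by (metis rotate0 id_apply)

lemma cyclic_replace_infix: "cyclic_replace A B (P @ A @ S) (P @ B @ S)"
  unfolding cyclic_replace_def by (metis append.assoc rotate_append)

lemma cyclic_replace_rotate:
  assumes "length A = length B" and "cyclic_replace A B w w'"
  shows "cyclic_replace A B (rotate s w) (rotate s w')"
proof -
  obtain r D where r: "rotate r w = A @ D" "rotate r w' = B @ D"
    using assms(2) unfolding cyclic_replace_def by blast
  define N where "N = length w"
  have "length w' = N"
    using arg_cong[OF r(1), of length] arg_cong[OF r(2), of length] assms(1) by (simp add: N_def)
  then have "rotate (r + (N - s mod N)) (rotate s w) = A @ D"
    and "rotate (r + (N - s mod N)) (rotate s w') = B @ D"
    using r rotate_cancel[of w N s] rotate_cancel[of w' N s] by (simp_all add: N_def rotate_rotate[symmetric])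
  then show ?thesis unfolding cyclic_replace_def by blast
qed

lemma cyclic_replace_map:
  "cyclic_replace A B w w' \<Longrightarrow> cyclic_replace (map f A) (map f B) (map f w) (map f w')"
  unfolding cyclic_replace_def by (metis map_append rotate_map)

section \<open>The state space\<close>

definition bullets :: "letter list \<Rightarrow> nat list" where
  "bullets w = [k. Bul k \<leftarrow> w]"

lemma bullets_simps [simp]:
  "bullets [] = []" "bullets (Bul k # w) = k # bullets w" "bullets (Box i # w) = bullets w"
  "bullets (v @ w) = bullets v @ bullets w"
  by (simp_all add: bullets_def)

lemma bullets_replicate_Box [simp]: "bullets (replicate m (Box i)) = []"
  by (induction m) auto

lemma bullets_map_Bul [simp]: "bullets (map Bul ks) = ks"
  by (induction ks) auto

lemma Bul_in_set_iff: "Bul k \<in> set w \<longleftrightarrow> k \<in> set (bullets w)"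
proof (induction w)
  case (Cons a w)
  then show ?case by (cases a) auto
qed simp

lemma length_filter_Bul: "length (filter (\<lambda>x. x = Bul k) w) = count_list (bullets w) k"
proof (induction w)
  case (Cons a w)
  then show ?case by (cases a) auto
qed simp

lemma bullets_rotate: "\<exists>m. bullets (rotate s w) = rotate m (bullets w)"
  unfolding bullets_def by (rule concat_map_rotate)

lemma Omega_iff:
  "w \<in> Omega L n \<longleftrightarrow>
     length w = L \<and> (\<forall>i. Box i \<in> set w \<longrightarrow> i < n) \<and> (\<exists>r. bullets w = rotate r [0..<n])"
proof
  assume "w \<in> Omega L n"
  then show "length w = L \<and> (\<forall>i. Box i \<in> set w \<longrightarrow> i < n) \<and> (\<exists>r. bullets w = rotate r [0..<n])"
    unfolding Omega_def bullets_def by auto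
next
  assume w: "length w = L \<and> (\<forall>i. Box i \<in> set w \<longrightarrow> i < n) \<and> (\<exists>r. bullets w = rotate r [0..<n])"
  then obtain r where r: "bullets w = rotate r [0..<n]" by blast
  have "x \<in> {Bul k |k. k < n} \<union> {Box i |i. i < n}" if "x \<in> set w" for x
  proof (cases x)
    case (Bul k)
    then show ?thesis using that r Bul_in_set_iff[of k w] by auto
  qed (use that w in auto)
  moreover have "length (filter (\<lambda>x. x = Bul k) w) = 1" if "k < n" for k
    using that r by (simp add: length_filter_Bul count_list_distinct)
  ultimately show "w \<in> Omega L n"
    using w unfolding Omega_def bullets_def[symmetric] by blast
qed

lemma finite_Omega: "finite (Omega L n)"
proof (rule finite_subset)
  show "Omega L n \<subseteq> {w. set w \<subseteq> Bul ` {..<n} \<union> Box ` {..<n} \<and> length w = L}"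
    unfolding Omega_def by auto
qed (simp add: finite_lists_length_eq)

lemma Omega_rotate: "w \<in> Omega L n \<Longrightarrow> rotate s w \<in> Omega L n"
  using bullets_rotate[of s w] by (auto simp: Omega_iff rotate_rotate)

lemma Omega_rotate_iff: "rotate s w \<in> Omega L n \<longleftrightarrow> w \<in> Omega L n"
  using Omega_rotate[of "rotate s w" L n "length w - s mod length w"] Omega_rotate[of w L n s]
  by (auto simp: rotate_cancel)

fun relabel :: "(nat \<Rightarrow> nat) \<Rightarrow> letter \<Rightarrow> letter" where
  "relabel f (Bul k) = Bul (f k)"
| "relabel f (Box i) = Box (f i)"

lemma is_box_relabel [simp]: "is_box (relabel f x) = is_box x"
  by (cases x) auto

lemma bullets_relabel: "bullets (map (relabel f) w) = map f (bullets w)"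
proof (induction w)
  case (Cons a w)
  then show ?case by (cases a) auto
qed simp

lemma Omega_relabel:
  assumes "w \<in> Omega L n" and "\<And>k. k < n \<Longrightarrow> f k < n" and "map f [0..<n] = rotate s [0..<n]"
  shows "map (relabel f) w \<in> Omega L n"
proof -
  obtain r where "bullets w = rotate r [0..<n]"
    using assms(1) by (auto simp: Omega_iff)
  then have "bullets (map (relabel f) w) = rotate (r + s) [0..<n]"
    using assms(3) by (simp add: bullets_relabel rotate_map[symmetric] rotate_rotate)
  moreover have "i < n" if box: "Box i \<in> set (map (relabel f) w)" for i
  proof -
    obtain x where x: "x \<in> set w" "relabel f x = Box i" using box by auto
    obtain j where "x = Box j" "i = f j" using x(2) by (cases x) auto
    then show ?thesis using x(1) assms(1,2) by (auto simp: Omega_iff)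
  qed
  ultimately show ?thesis
    using assms(1) by (auto simp: Omega_iff)
qed

lemma cyclic_replace_Omega:
  assumes "cyclic_replace A B w w'" and "w \<in> Omega L n"
    and "length B = length A" and "bullets B = bullets A"
    and "\<And>i. Box i \<in> set B \<Longrightarrow> Box i \<in> set A \<or> i < n"
  shows "w' \<in> Omega L n"
proof -
  obtain r D where r: "rotate r w = A @ D" "rotate r w' = B @ D"
    using assms(1) unfolding cyclic_replace_def by blast
  have "A @ D \<in> Omega L n"
    using assms(2) r(1) Omega_rotate_iff by metis
  then have "B @ D \<in> Omega L n"
    using assms(3-5) by (auto simp: Omega_iff)
  then show ?thesis
    using r(2) Omega_rotate_iff by metis
qed

section \<open>Transitions\<close>

lemma prv_less: "0 < n \<Longrightarrow> prv n k < n"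
  unfolding prv_def by simp

lemma nxt_less: "0 < n \<Longrightarrow> nxt n k < n"
  unfolding nxt_def by simp

lemma nxt_prv: "k < n \<Longrightarrow> nxt n (prv n k) = k"
proof -
  assume "k < n"
  have "nxt n (prv n k) = (k + n - 1 + 1) mod n"
    unfolding nxt_def prv_def by (rule mod_add_left_eq)
  also have "k + n - 1 + 1 = k + n" using \<open>k < n\<close> by simp
  finally show ?thesis using \<open>k < n\<close> by simp
qed

lemma prv_nxt: "k < n \<Longrightarrow> prv n (nxt n k) = k"
proof -
  assume "k < n"
  have "prv n (nxt n k) = ((k + 1) mod n + (n - 1)) mod n"
    unfolding nxt_def prv_def using \<open>k < n\<close> by simp
  also have "\<dots> = (k + 1 + (n - 1)) mod n" by (rule mod_add_left_eq)
  also have "k + 1 + (n - 1) = k + n" using \<open>k < n\<close> by simp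
  finally show ?thesis using \<open>k < n\<close> by simp
qed

lemma prv_Suc: "Suc j < n \<Longrightarrow> prv n (Suc j) = j"
  unfolding prv_def by simp

lemma nxt_less_Suc: "Suc j < n \<Longrightarrow> nxt n j = Suc j"
  unfolding nxt_def by simp

lemma prv_0: "0 < n \<Longrightarrow> prv n 0 = n - 1"
  unfolding prv_def by simp

lemma nxt_last: "0 < n \<Longrightarrow> nxt n (n - 1) = 0"
  unfolding nxt_def by simp

lemma T1_iff: "T1 n k w w' \<longleftrightarrow> (\<exists>i. i \<noteq> k \<and> cyclic_replace [Bul k, Box i] [Box i, Bul k] w w')"
  unfolding T1_def cyclic_replace_def by blast

lemma T2_iff:
  "T2 n k w w' \<longleftrightarrow> (\<exists>C. (\<forall>c\<in>set C. is_box c) \<and>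
     cyclic_replace ([Bul (prv n k)] @ C @ [Bul k, Box k]) ([Bul (prv n k), Box (prv n k)] @ C @ [Bul k]) w w')"
  unfolding T2_def cyclic_replace_def by (simp only: append_assoc) blast

lemma T3_iff: "T3 n k w w' \<longleftrightarrow> (\<exists>i. i \<noteq> k \<and> cyclic_replace [Box i, Bul k] [Bul k, Box i] w w')"
  unfolding T3_def cyclic_replace_def by blast

lemma T4_iff:
  "T4 n k w w' \<longleftrightarrow> (\<exists>C. (\<forall>c\<in>set C. is_box c) \<and>
     cyclic_replace ([Box k, Bul k] @ C @ [Bul (nxt n k)]) ([Bul k] @ C @ [Box (nxt n k), Bul (nxt n k)]) w w')"
  unfolding T4_def cyclic_replace_def by (simp only: append_assoc) blast

definition transition :: "nat \<Rightarrow> nat \<Rightarrow> letter list \<Rightarrow> letter list \<Rightarrow> bool" where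
  "transition n k w w' \<longleftrightarrow> T1 n k w w' \<or> T2 n k w w' \<or> T3 n k w w' \<or> T4 n k w w'"

lemma transition_rotate:
  assumes "transition n k w w'"
  shows "transition n k (rotate s w) (rotate s w')"
proof -
  have rot: "cyclic_replace A B (rotate s w) (rotate s w')"
    if "cyclic_replace A B w w'" "length A = length B" for A B :: "letter list"
    using cyclic_replace_rotate that by blast
  show ?thesis
    using assms unfolding transition_def T1_iff T2_iff T3_iff T4_iff
    by (elim disjE exE conjE) (use rot in \<open>force+\<close>)
qed

lemma transition_Omega:
  assumes "transition n k w w'" and "k < n" and "w \<in> Omega L n"
  shows "w' \<in> Omega L n"
proof -
  have "prv n k < n" "nxt n k < n"
    using assms(2) by (simp_all add: prv_less nxt_less)
  then show ?thesis
    using assms(1,3) unfolding transition_def T1_iff T2_iff T3_iff T4_iff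
    by (elim disjE exE conjE) (erule cyclic_replace_Omega; force)+
qed

lemma T1_relabel:
  assumes "inj f" and "T1 n k w w'"
  shows "T1 n (f k) (map (relabel f) w) (map (relabel f) w')"
proof -
  obtain i where "i \<noteq> k" and cr: "cyclic_replace [Bul k, Box i] [Box i, Bul k] w w'"
    using assms(2) unfolding T1_iff by blast
  then have "f i \<noteq> f k" "cyclic_replace [Bul (f k), Box (f i)] [Box (f i), Bul (f k)]
      (map (relabel f) w) (map (relabel f) w')"
    using assms(1) cyclic_replace_map[OF cr, of "relabel f"] by (auto simp: inj_eq)
  then show ?thesis unfolding T1_iff by blast
qed

lemma T3_relabel:
  assumes "inj f" and "T3 n k w w'"
  shows "T3 n (f k) (map (relabel f) w) (map (relabel f) w')"
proof -
  obtain i where "i \<noteq> k" and cr: "cyclic_replace [Box i, Bul k] [Bul k, Box i] w w'"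
    using assms(2) unfolding T3_iff by blast
  then have "f i \<noteq> f k" "cyclic_replace [Box (f i), Bul (f k)] [Bul (f k), Box (f i)]
      (map (relabel f) w) (map (relabel f) w')"
    using assms(1) cyclic_replace_map[OF cr, of "relabel f"] by (auto simp: inj_eq)
  then show ?thesis unfolding T3_iff by blast
qed

lemma T2_relabel:
  assumes "f (prv n k) = prv n (f k)" and "T2 n k w w'"
  shows "T2 n (f k) (map (relabel f) w) (map (relabel f) w')"
proof -
  obtain C where "\<forall>c\<in>set C. is_box c"
    and cr: "cyclic_replace ([Bul (prv n k)] @ C @ [Bul k, Box k]) ([Bul (prv n k), Box (prv n k)] @ C @ [Bul k]) w w'"
    using assms(2) unfolding T2_iff by blast
  then have "\<forall>c\<in>set (map (relabel f) C). is_box c"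
    "cyclic_replace ([Bul (prv n (f k))] @ map (relabel f) C @ [Bul (f k), Box (f k)])
      ([Bul (prv n (f k)), Box (prv n (f k))] @ map (relabel f) C @ [Bul (f k)])
      (map (relabel f) w) (map (relabel f) w')"
    using assms(1) cyclic_replace_map[OF cr, of "relabel f"] by auto
  then show ?thesis unfolding T2_iff by blast
qed

lemma T4_relabel:
  assumes "f (nxt n k) = nxt n (f k)" and "T4 n k w w'"
  shows "T4 n (f k) (map (relabel f) w) (map (relabel f) w')"
proof -
  obtain C where "\<forall>c\<in>set C. is_box c"
    and cr: "cyclic_replace ([Box k, Bul k] @ C @ [Bul (nxt n k)]) ([Bul k] @ C @ [Box (nxt n k), Bul (nxt n k)]) w w'"
    using assms(2) unfolding T4_iff by blast
  then have "\<forall>c\<in>set (map (relabel f) C). is_box c"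
    "cyclic_replace ([Box (f k), Bul (f k)] @ map (relabel f) C @ [Bul (nxt n (f k))])
      ([Bul (f k)] @ map (relabel f) C @ [Box (nxt n (f k)), Bul (nxt n (f k))])
      (map (relabel f) w) (map (relabel f) w')"
    using assms(1) cyclic_replace_map[OF cr, of "relabel f"] by auto
  then show ?thesis unfolding T4_iff by blast
qed

lemma rate_nonneg:
  assumes "\<forall>k<n. 0 < p k" and "\<forall>k<n. 0 < q k"
  shows "0 \<le> rate n p q w w'"
  unfolding rate_def
proof (intro sum_nonneg)
  fix k assume "k \<in> {..<n}"
  then have "0 < p k" "0 < q k" using assms by auto
  then show "0 \<le> (if T1 n k w w' then p k else 0) + (if T2 n k w w' then p k else 0)
    + (if T3 n k w w' then q k else 0) + (if T4 n k w w' then q k else 0)" by simp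
qed

lemma rate_pos_if_transition:
  assumes "\<forall>k<n. 0 < p k" and "\<forall>k<n. 0 < q k" and "k < n" and "transition n k w w'"
  shows "0 < rate n p q w w'"
proof -
  define summand where "summand j =
      (if T1 n j w w' then p j else 0) + (if T2 n j w w' then p j else 0)
    + (if T3 n j w w' then q j else 0) + (if T4 n j w w' then q j else 0)" for j
  have "0 \<le> summand j" if "j < n" for j
    using assms(1,2) that by (simp add: summand_def less_imp_le)
  have "0 < p k" "0 < q k" using assms by auto
  then have "0 < summand k"
    using assms(4) unfolding summand_def transition_def by auto
  also have "summand k \<le> (\<Sum>j<n. summand j)"
    using assms(3) \<open>\<And>j. j < n \<Longrightarrow> 0 \<le> summand j\<close> by (intro member_le_sum) auto
  finally show ?thesis
    unfolding rate_def summand_def .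
qed

section \<open>Irreducibility\<close>

definition step :: "nat \<Rightarrow> nat \<Rightarrow> letter list \<Rightarrow> letter list \<Rightarrow> bool" where
  "step L n w w' \<longleftrightarrow> w \<in> Omega L n \<and> (\<exists>k<n. transition n k w w')"

lemma step_Omega: "step L n w w' \<Longrightarrow> w' \<in> Omega L n"
  unfolding step_def using transition_Omega by blast

lemma reach_Omega: "(step L n)\<^sup>*\<^sup>* w w' \<Longrightarrow> w \<in> Omega L n \<Longrightarrow> w' \<in> Omega L n"
  by (induction rule: rtranclp_induct) (auto dest: step_Omega)

lemma step_rotate: "step L n w w' \<Longrightarrow> step L n (rotate s w) (rotate s w')"
  unfolding step_def using transition_rotate Omega_rotate by blast

lemma reach_rotate: "(step L n)\<^sup>*\<^sup>* w w' \<Longrightarrow> (step L n)\<^sup>*\<^sup>* (rotate s w) (rotate s w')"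
  by (induction rule: rtranclp_induct) (auto intro: rtranclp.rtrancl_into_rtrancl step_rotate)

definition reach_rot :: "nat \<Rightarrow> nat \<Rightarrow> letter list \<Rightarrow> letter list \<Rightarrow> bool" where
  "reach_rot L n w w' \<longleftrightarrow> (\<exists>s. (step L n)\<^sup>*\<^sup>* w (rotate s w'))"

lemma reach_rot_refl: "reach_rot L n w w"
  unfolding reach_rot_def by (metis id_apply rotate0 rtranclp.rtrancl_refl)

lemma reach_rot_trans: "reach_rot L n u v \<Longrightarrow> reach_rot L n v w \<Longrightarrow> reach_rot L n u w"
  unfolding reach_rot_def by (metis reach_rotate rotate_rotate rtranclp_trans)

lemma reach_rot_Omega: "reach_rot L n w w' \<Longrightarrow> w \<in> Omega L n \<Longrightarrow> w' \<in> Omega L n"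
  unfolding reach_rot_def using reach_Omega Omega_rotate_iff by metis

lemma reach_rot_of_reach_rotated:
  assumes "(step L n)\<^sup>*\<^sup>* (rotate a w) (rotate b w')"
  shows "reach_rot L n w w'"
proof -
  define c where "c = length w - a mod length w"
  have "(step L n)\<^sup>*\<^sup>* (rotate c (rotate a w)) (rotate (c + b) w')"
    using reach_rotate[OF assms, of c] by (simp add: rotate_rotate)
  then show ?thesis
    unfolding reach_rot_def c_def rotate_cancel[OF refl] by blast
qed

definition gap_word :: "nat list \<Rightarrow> (nat \<Rightarrow> nat list) \<Rightarrow> letter list" where
  "gap_word ks G = concat (map (\<lambda>j. Bul j # map Box (G j)) ks)"

lemma gap_word_simps [simp]:
  "gap_word [] G = []"
  "gap_word (j # ks) G = Bul j # map Box (G j) @ gap_word ks G"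
  "gap_word (ks @ ks') G = gap_word ks G @ gap_word ks' G"
  by (simp_all add: gap_word_def)

lemma gap_word_cong: "(\<And>j. j \<in> set ks \<Longrightarrow> G j = G' j) \<Longrightarrow> gap_word ks G = gap_word ks G'"
  by (induction ks) auto

lemma gap_word_rotate: "\<exists>m. gap_word (rotate s ks) G = rotate m (gap_word ks G)"
  unfolding gap_word_def by (rule concat_map_rotate)

abbreviation config :: "nat \<Rightarrow> (nat \<Rightarrow> nat list) \<Rightarrow> letter list" where
  "config n G \<equiv> gap_word [0..<n] G"

lemma gap_word_empty: "(\<And>j. j \<in> set ks \<Longrightarrow> G j = []) \<Longrightarrow> gap_word ks G = map Bul ks"
  by (induction ks) auto

lemma gap_label_less: "config n G \<in> Omega L n \<Longrightarrow> j < n \<Longrightarrow> y \<in> set (G j) \<Longrightarrow> y < n"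
  by (fastforce simp: Omega_iff gap_word_def)

lemma split_at_bullets:
  "distinct (bullets v) \<Longrightarrow> \<exists>B G. v = map Box B @ gap_word (bullets v) G"
proof (induction v)
  case Nil
  show ?case by simp
next
  case (Cons a v)
  then obtain B G where v: "v = map Box B @ gap_word (bullets v) G"
    by (cases a) auto
  show ?case
  proof (cases a)
    case (Bul k)
    with Cons.prems have "k \<notin> set (bullets v)" by simp
    then have "gap_word (bullets v) (G(k := B)) = gap_word (bullets v) G"
      by (intro gap_word_cong) auto
    then have "a # v = map Box [] @ gap_word (bullets (a # v)) (G(k := B))"
      using v Bul by simp
    then show ?thesis by blast
  next
    case (Box i)
    then have "a # v = map Box (i # B) @ gap_word (bullets (a # v)) G"
      using v by simp
    then show ?thesis by blast
  qed
qed

lemma rotate_upt_eq_upt: "hd (rotate t [0..<n]) = 0 \<Longrightarrow> rotate t [0..<n] = [0..<n]"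
proof (cases "n = 0")
  case False
  assume "hd (rotate t [0..<n]) = 0"
  then have "t mod n = 0"
    using False by (simp add: hd_conv_nth nth_rotate)
  then show ?thesis by (simp add: rotate_id)
qed simp

lemma Omega_eq_rotate_config:
  assumes "w \<in> Omega L n" and "0 < n"
  shows "\<exists>s G. w = rotate s (config n G)"
proof -
  obtain r where r: "bullets w = rotate r [0..<n]"
    using assms(1) by (auto simp: Omega_iff)
  then have "Bul 0 \<in> set w"
    using assms(2) Bul_in_set_iff by simp
  then obtain a where a: "a < length w" "w ! a = Bul 0"
    by (metis in_set_conv_nth)
  define v where "v = rotate a w"
  have "0 < length w" using a(1) by linarith
  then have "v \<noteq> []" "v ! 0 = Bul 0"
    using a nth_rotate[of 0 w a] by (auto simp: v_def)
  then obtain v' where v': "v = Bul 0 # v'"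
    by (cases v) auto
  obtain m where "bullets v = rotate m (bullets w)"
    using bullets_rotate unfolding v_def by blast
  then have "bullets v = rotate (m + r) [0..<n]"
    using r by (simp add: rotate_rotate)
  then have bv: "bullets v = [0..<n]"
    using v' rotate_upt_eq_upt by (metis bullets_simps(2) list.sel(1))
  then obtain B G where "v = map Box B @ config n G"
    using split_at_bullets[of v] by auto
  then have "v = config n G"
    using v' assms(2) by (cases B) (auto simp: upt_conv_Cons)
  then have "w = rotate (length w - a mod length w) (config n G)"
    unfolding v_def using rotate_cancel by metis
  then show ?thesis by blast
qed

lemma rotate_upt_split:
  assumes "2 \<le> n" and "k < n"
  obtains ms where "rotate k [0..<n] = k # ms @ [prv n k]" and "distinct (k # ms @ [prv n k])"
    and "hd (ms @ [prv n k]) = nxt n k"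
proof -
  let ?xs = "rotate k [0..<n]"
  obtain a ys where xs: "?xs = a # ys"
    using assms(1) by (cases ?xs) auto
  have "length ys = n - 1"
    using arg_cong[OF xs, of length] by simp
  then have "ys \<noteq> []"
    using assms(1) by auto
  have "a = k"
    using xs nth_rotate[of 0 "[0..<n]" k] assms by simp
  have "last ys = ?xs ! (n - 1)"
    using xs \<open>length ys = n - 1\<close> \<open>ys \<noteq> []\<close> assms(1) by (simp add: last_conv_nth nth_Cons')
  also have "\<dots> = prv n k"
    using assms by (simp add: nth_rotate prv_def add.commute)
  finally have "last ys = prv n k" .
  have "hd ys = ?xs ! 1"
    using xs \<open>ys \<noteq> []\<close> by (simp add: hd_conv_nth)
  also have "\<dots> = nxt n k"
    using assms by (simp add: nth_rotate nxt_def add.commute)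
  finally have "hd ys = nxt n k" .
  have "ys = butlast ys @ [prv n k]"
    using \<open>ys \<noteq> []\<close> \<open>last ys = prv n k\<close> by (metis append_butlast_last_id)
  then show ?thesis
    using that[of "butlast ys"] xs \<open>a = k\<close> \<open>hd ys = nxt n k\<close> distinct_rotate[of k "[0..<n]"]
    by (metis distinct_upt)
qed

lemma prv_neq_self: "2 \<le> n \<Longrightarrow> k < n \<Longrightarrow> prv n k \<noteq> k"
  by (metis rotate_upt_split distinct.simps(2) in_set_conv_decomp)

text \<open>A box \<open>x\<close> just left of particle \<open>k\<close> passes to its right: by T3 if \<open>x \<noteq> k\<close>, and by T4
  otherwise, becoming a box \<open>k + 1\<close> just left of particle \<open>k + 1\<close>.\<close>
lemma transition_box_passes:
  assumes "x = k \<Longrightarrow> \<exists>D. Y = Bul (nxt n k) # D"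
  shows "transition n k (Box x # Bul k # map Box C @ Y)
    (Bul k # map Box (if x = k then C @ [nxt n k] else x # C) @ Y)"
proof (cases "x = k")
  case True
  then obtain D where "Y = Bul (nxt n k) # D"
    using assms by blast
  then have "cyclic_replace ([Box k, Bul k] @ map Box C @ [Bul (nxt n k)])
      ([Bul k] @ map Box C @ [Box (nxt n k), Bul (nxt n k)])
      (Box x # Bul k # map Box C @ Y) (Bul k # map Box (C @ [nxt n k]) @ Y)"
    using True cyclic_replace_prefix[of "[Box k, Bul k] @ map Box C @ [Bul (nxt n k)]"
        "[Bul k] @ map Box C @ [Box (nxt n k), Bul (nxt n k)]" D] by simp
  then have "T4 n k (Box x # Bul k # map Box C @ Y) (Bul k # map Box (C @ [nxt n k]) @ Y)"
    unfolding T4_iff by (intro exI[of _ "map Box C"]) auto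
  then show ?thesis
    using True unfolding transition_def by simp
next
  case False
  then have "T3 n k (Box x # Bul k # map Box C @ Y) (Bul k # map Box (x # C) @ Y)"
    unfolding T3_iff using cyclic_replace_prefix[of "[Box x, Bul k]" "[Bul k, Box x]"] by auto
  then show ?thesis
    using False unfolding transition_def by simp
qed

lemma reach_rot_of_transition:
  assumes "transition n k (rotate a w) (rotate b w')" and "k < n" and "w \<in> Omega L n"
  shows "reach_rot L n w w'"
proof -
  have "step L n (rotate a w) (rotate b w')"
    using assms Omega_rotate unfolding step_def by blast
  then show ?thesis
    by (intro reach_rot_of_reach_rotated r_into_rtranclp)
qed

lemma move_last_box:
  assumes "2 \<le> n" and "k < n" and G: "config n G \<in> Omega L n" and A: "G (prv n k) = A @ [x]"
  shows "reach_rot L n (config n G)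
    (config n (G(prv n k := A, k := if x = k then G k @ [nxt n k] else x # G k)))"
proof -
  define G' where "G' = G(prv n k := A, k := if x = k then G k @ [nxt n k] else x # G k)"
  obtain ms where ms: "rotate k [0..<n] = k # ms @ [prv n k]" and "distinct (k # ms @ [prv n k])"
    and hd_ms: "hd (ms @ [prv n k]) = nxt n k"
    using rotate_upt_split[OF assms(1,2)] .
  then have "k \<noteq> prv n k" and "gap_word ms G' = gap_word ms G"
    by (auto simp: G'_def intro!: gap_word_cong)
  define Y where "Y = gap_word ms G @ [Bul (prv n k)] @ map Box A"
  have "x = k \<Longrightarrow> \<exists>D. Y = Bul (nxt n k) # D"
    using hd_ms by (cases ms) (auto simp: Y_def)
  then have "transition n k (Box x # Bul k # map Box (G k) @ Y) (Bul k # map Box (G' k) @ Y)"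
    using transition_box_passes[of x k Y n "G k"] by (simp add: G'_def)
  moreover have "rotate (Suc (length (map Box (G k) @ Y))) (gap_word (rotate k [0..<n]) G)
      = Box x # Bul k # map Box (G k) @ Y"
    using ms A rotate_append[of "Bul k # map Box (G k) @ Y" "[Box x]"] by (simp add: Y_def)
  moreover have "gap_word (rotate k [0..<n]) G' = Bul k # map Box (G' k) @ Y"
    using ms \<open>k \<noteq> prv n k\<close> \<open>gap_word ms G' = gap_word ms G\<close> by (simp add: Y_def G'_def)
  moreover obtain m m' where "gap_word (rotate k [0..<n]) G = rotate m (config n G)"
    and "gap_word (rotate k [0..<n]) G' = rotate m' (config n G')"
    using gap_word_rotate by metis
  ultimately have "transition n k (rotate (Suc (length (map Box (G k) @ Y)) + m) (config n G))
      (rotate m' (config n G'))"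
    by (simp add: rotate_rotate)
  then show ?thesis
    unfolding G'_def[symmetric] using assms(2) G by (rule reach_rot_of_transition)
qed

definition bump :: "nat \<Rightarrow> nat \<Rightarrow> nat \<Rightarrow> nat" where
  "bump n k y = (if y = k then nxt n k else y)"

lemma drain_gap:
  assumes "2 \<le> n" and "k < n"
  shows "config n G \<in> Omega L n \<Longrightarrow> G (prv n k) = A \<Longrightarrow>
    \<exists>G'. reach_rot L n (config n G) (config n G') \<and> G' (prv n k) = []
      \<and> (\<forall>j. j \<noteq> k \<longrightarrow> j \<noteq> prv n k \<longrightarrow> G' j = G j)
      \<and> set (G' k) \<subseteq> set (G k) \<union> bump n k ` set A"
proof (induction A arbitrary: G rule: rev_induct)
  case Nil
  then show ?case by (blast intro: reach_rot_refl)
next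
  case (snoc x A)
  define G1 where "G1 = G(prv n k := A, k := if x = k then G k @ [nxt n k] else x # G k)"
  have reach1: "reach_rot L n (config n G) (config n G1)"
    unfolding G1_def by (rule move_last_box[OF assms snoc.prems])
  then have "config n G1 \<in> Omega L n"
    using snoc.prems(1) by (rule reach_rot_Omega)
  moreover have "G1 (prv n k) = A"
    using prv_neq_self[OF assms] by (simp add: G1_def)
  ultimately obtain G' where G': "reach_rot L n (config n G1) (config n G')" "G' (prv n k) = []"
    "\<forall>j. j \<noteq> k \<longrightarrow> j \<noteq> prv n k \<longrightarrow> G' j = G1 j" "set (G' k) \<subseteq> set (G1 k) \<union> bump n k ` set A"
    using snoc.IH by blast
  have "set (G1 k) = set (G k) \<union> {bump n k x}"
    by (auto simp: G1_def bump_def)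
  then have "set (G' k) \<subseteq> set (G k) \<union> bump n k ` set (A @ [x])"
    using G'(4) by auto
  moreover have "\<forall>j. j \<noteq> k \<longrightarrow> j \<noteq> prv n k \<longrightarrow> G' j = G j"
    using G'(3) by (simp add: G1_def)
  ultimately show ?case
    using G'(2) reach_rot_trans[OF reach1 G'(1)] by blast
qed

lemma empty_leading_gaps:
  assumes "2 \<le> n" and "config n G \<in> Omega L n"
  shows "j \<le> n - 1 \<Longrightarrow> \<exists>G'. reach_rot L n (config n G) (config n G') \<and> (\<forall>i<j. G' i = [])"
proof (induction j)
  case 0
  show ?case by (blast intro: reach_rot_refl)
next
  case (Suc j)
  then obtain G1 where G1: "reach_rot L n (config n G) (config n G1)" "\<forall>i<j. G1 i = []"
    by auto
  have "Suc j < n" using Suc.prems assms(1) by simp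
  moreover have "config n G1 \<in> Omega L n"
    using G1(1) assms(2) by (rule reach_rot_Omega)
  ultimately obtain G' where G': "reach_rot L n (config n G1) (config n G')" "G' j = []"
    "\<forall>i. i \<noteq> Suc j \<longrightarrow> i \<noteq> j \<longrightarrow> G' i = G1 i"
    using drain_gap[OF assms(1), of "Suc j"] prv_Suc by force
  then have "\<forall>i<Suc j. G' i = []"
    using G1(2) by (metis less_Suc_eq nat_neq_iff)
  then show ?case
    using reach_rot_trans[OF G1(1) G'(1)] by blast
qed

lemma drain_block:
  assumes "2 \<le> n" and "k < n" and "config n G \<in> Omega L n"
    and "\<forall>i<n. i \<noteq> prv n k \<longrightarrow> G i = []"
  shows "\<exists>G'. reach_rot L n (config n G) (config n G') \<and> (\<forall>i<n. i \<noteq> k \<longrightarrow> G' i = [])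
    \<and> set (G' k) \<subseteq> bump n k ` set (G (prv n k))"
proof -
  obtain G' where "reach_rot L n (config n G) (config n G')" "G' (prv n k) = []"
    "\<forall>i. i \<noteq> k \<longrightarrow> i \<noteq> prv n k \<longrightarrow> G' i = G i"
    "set (G' k) \<subseteq> set (G k) \<union> bump n k ` set (G (prv n k))"
    using drain_gap[OF assms(1-3) refl] by blast
  moreover have "G k = []"
    using assms(2,4) prv_neq_self[OF assms(1,2)] by simp
  ultimately show ?thesis
    using assms(4) by (metis sup_bot.left_neutral empty_set)
qed

lemma sweep_gaps:
  assumes "2 \<le> n" and "config n G \<in> Omega L n" and "\<forall>i<n. i \<noteq> n - 1 \<longrightarrow> G i = []"
  shows "j \<le> n - 2 \<Longrightarrow> \<exists>G'. reach_rot L n (config n G) (config n G')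
    \<and> (\<forall>i<n. i \<noteq> j \<longrightarrow> G' i = []) \<and> (\<forall>y\<in>set (G' j). j < y)"
proof (induction j)
  case 0
  have "0 < n" and "\<forall>i<n. i \<noteq> prv n 0 \<longrightarrow> G i = []"
    using assms(1,3) prv_0[of n] by simp_all
  then obtain G' where "reach_rot L n (config n G) (config n G')" "\<forall>i<n. i \<noteq> 0 \<longrightarrow> G' i = []"
    and "set (G' 0) \<subseteq> bump n 0 ` set (G (n - 1))"
    using drain_block[OF assms(1) _ assms(2), of 0] prv_0[of n] by metis
  moreover have "nxt n 0 = 1"
    using assms(1) by (simp add: nxt_def)
  ultimately show ?case
    by (intro exI[of _ G']) (auto simp: bump_def)
next
  case (Suc j)
  then obtain G1 where G1: "reach_rot L n (config n G) (config n G1)"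
    "\<forall>i<n. i \<noteq> j \<longrightarrow> G1 i = []" "\<forall>y\<in>set (G1 j). j < y"
    by auto
  have "Suc (Suc j) < n" using Suc.prems assms(1) by simp
  then have "Suc j < n" and "\<forall>i<n. i \<noteq> prv n (Suc j) \<longrightarrow> G1 i = []"
    using G1(2) prv_Suc[of j n] by simp_all
  moreover have "config n G1 \<in> Omega L n"
    using G1(1) assms(2) by (rule reach_rot_Omega)
  ultimately obtain G' where G': "reach_rot L n (config n G1) (config n G')"
    "\<forall>i<n. i \<noteq> Suc j \<longrightarrow> G' i = []" "set (G' (Suc j)) \<subseteq> bump n (Suc j) ` set (G1 j)"
    using drain_block[OF assms(1)] prv_Suc[of j n] by metis
  have "\<forall>y\<in>set (G' (Suc j)). Suc j < y"
    using G'(3) G1(3) nxt_less_Suc[OF \<open>Suc (Suc j) < n\<close>] by (force simp: bump_def)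
  then show ?case
    using reach_rot_trans[OF G1(1) G'(1)] G'(2) by blast
qed

definition canon :: "nat \<Rightarrow> nat \<Rightarrow> letter list" where
  "canon L n = map Bul [0..<n] @ replicate (L - n) (Box 0)"

lemma canon_Omega: "0 < n \<Longrightarrow> n < L \<Longrightarrow> canon L n \<in> Omega L n"
  unfolding canon_def Omega_iff by (auto intro: exI[of _ 0])

lemma config_eq_canon:
  assumes "config n G \<in> Omega L n" and "0 < n"
    and "\<forall>i<n. i \<noteq> n - 1 \<longrightarrow> G i = []" and "set (G (n - 1)) \<subseteq> {0}"
  shows "config n G = canon L n"
proof -
  have "config n G = map Bul [0..<n] @ map Box (G (n - 1))"
    using upt_Suc_append[of 0 "n - 1"] gap_word_empty[of "[0..<n - 1]" G] assms(2,3) by simp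
  moreover have "G (n - 1) = replicate (length (G (n - 1))) 0"
    using assms(4) by (metis replicate_length_same singletonD subsetD)
  moreover have "length (config n G) = L"
    using assms(1) by (simp add: Omega_iff)
  ultimately show ?thesis
    unfolding canon_def by (metis map_replicate length_append length_map length_upt diff_zero
        add_diff_cancel_left')
qed

text \<open>First all boxes are collected between particles \<open>n - 1\<close> and 0, then swept once around
  the ring. Passing particle \<open>k\<close> turns boxes labelled \<open>k\<close> into boxes labelled \<open>k + 1\<close> and
  leaves the others, so after the sweep every label has wrapped around to 0.\<close>
lemma reach_rot_canon:
  assumes "2 \<le> n" and G: "config n G \<in> Omega L n"
  shows "reach_rot L n (config n G) (canon L n)"
proof -
  have last: "n - 1 < n" and pl: "prv n (n - 1) = n - 2"
    using assms(1) prv_Suc[of "n - 2" n] by (simp_all add: numeral_2_eq_2 Suc_diff_Suc)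
  obtain G1 where G1: "reach_rot L n (config n G) (config n G1)" "\<forall>i<n - 1. G1 i = []"
    using empty_leading_gaps[OF assms] by blast
  have G1_Omega: "config n G1 \<in> Omega L n"
    using G1(1) G by (rule reach_rot_Omega)
  moreover have "\<forall>i<n. i \<noteq> n - 1 \<longrightarrow> G1 i = []"
    using G1(2) by auto
  ultimately obtain G2 where G2: "reach_rot L n (config n G1) (config n G2)"
    "\<forall>i<n. i \<noteq> n - 2 \<longrightarrow> G2 i = []" "\<forall>y\<in>set (G2 (n - 2)). n - 2 < y"
    using sweep_gaps[OF assms(1)] by blast
  have G2_Omega: "config n G2 \<in> Omega L n"
    using G2(1) G1_Omega by (rule reach_rot_Omega)
  moreover have "\<forall>i<n. i \<noteq> prv n (n - 1) \<longrightarrow> G2 i = []"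
    using G2(2) pl by simp
  ultimately obtain G3 where G3: "reach_rot L n (config n G2) (config n G3)"
    "\<forall>i<n. i \<noteq> n - 1 \<longrightarrow> G3 i = []" "set (G3 (n - 1)) \<subseteq> bump n (n - 1) ` set (G2 (n - 2))"
    using drain_block[OF assms(1) last] pl by metis
  have "set (G2 (n - 2)) \<subseteq> {n - 1}"
    using G2(3) gap_label_less[OF G2_Omega, of "n - 2"] assms(1) by fastforce
  then have "set (G3 (n - 1)) \<subseteq> {0}"
    using G3(3) nxt_last[of n] assms(1) by (auto simp: bump_def)
  then have "config n G3 = canon L n"
    using config_eq_canon reach_rot_Omega[OF G3(1) G2_Omega] G3(2) assms(1) by simp
  then show ?thesis
    using reach_rot_trans[OF G1(1) reach_rot_trans[OF G2(1) G3(1)]] by simp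
qed

text \<open>T4 hands a box \<open>j\<close> just left of particle \<open>j\<close> on as a box \<open>j + 1\<close> just left of
  particle \<open>j + 1\<close>; a full tour of the box rotates \<open>canon\<close> by one position.\<close>
definition travelling_box :: "nat \<Rightarrow> nat \<Rightarrow> nat \<Rightarrow> letter list" where
  "travelling_box L n j = map Bul [0..<j] @ [Box j] @ map Bul [j..<n] @ replicate (L - n - 1) (Box 0)"

lemma travelling_box_Omega: "j < n \<Longrightarrow> n < L \<Longrightarrow> travelling_box L n j \<in> Omega L n"
  unfolding travelling_box_def Omega_iff
  using upt_add_eq_append[of 0 j "n - j"] by (auto intro: exI[of _ 0] simp del: upt_add_eq_append)

lemma travelling_box_step:
  assumes "Suc j < n" and "n < L"
  shows "step L n (travelling_box L n j) (travelling_box L n (Suc j))"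
proof -
  define S where "S = map Bul [Suc (Suc j)..<n] @ replicate (L - n - 1) (Box 0)"
  have "[j..<n] = j # Suc j # [Suc (Suc j)..<n]" "[Suc j..<n] = Suc j # [Suc (Suc j)..<n]"
    using assms(1) by (simp_all add: upt_conv_Cons)
  then have "travelling_box L n j = map Bul [0..<j] @ ([Box j, Bul j] @ [] @ [Bul (nxt n j)]) @ S"
    "travelling_box L n (Suc j) = map Bul [0..<j] @ ([Bul j] @ [] @ [Box (nxt n j), Bul (nxt n j)]) @ S"
    using nxt_less_Suc[OF assms(1)] by (simp_all add: travelling_box_def S_def)
  then have "T4 n j (travelling_box L n j) (travelling_box L n (Suc j))"
    unfolding T4_iff by (metis cyclic_replace_infix empty_iff empty_set)
  moreover have "j < n" using assms(1) by simp
  ultimately show ?thesis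
    using travelling_box_Omega[OF \<open>j < n\<close> assms(2)] unfolding step_def transition_def by blast
qed

lemma travelling_box_last_step:
  assumes "2 \<le> n" and "n < L"
  shows "step L n (travelling_box L n (n - 1)) (canon L n)"
proof -
  define R where "R = replicate (L - n - 1) (Box 0)"
  define M where "M = map Bul [1..<n - 1]"
  have upt: "[0..<n - 1] = 0 # [1..<n - 1]" "[n - 1..<n] = [n - 1]" "[0..<n] = [0..<n - 1] @ [n - 1]"
    using assms(1) upt_Suc_append[of 0 "n - 1"] by (simp_all add: upt_conv_Cons)
  have "replicate (L - n) (Box 0) = R @ [Box 0]"
    using assms(2) by (simp add: R_def replicate_append_same[symmetric] Suc_diff_Suc[symmetric])
  then have "rotate (n - 1) (travelling_box L n (n - 1)) = ([Box (n - 1), Bul (n - 1)] @ R @ [Bul 0]) @ M"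
    "rotate (n - 1) (canon L n) = ([Bul (n - 1)] @ R @ [Box 0, Bul 0]) @ M"
    using rotate_append[of "map Bul [0..<n - 1]"] upt
    by (simp_all add: travelling_box_def canon_def R_def M_def)
  then have "T4 n (n - 1) (travelling_box L n (n - 1)) (canon L n)"
    unfolding T4_iff cyclic_replace_def using nxt_last[of n] assms(1)
    by (intro exI[of _ R]) (auto simp: R_def)
  moreover have "n - 1 < n" using assms(1) by simp
  ultimately show ?thesis
    using travelling_box_Omega[OF \<open>n - 1 < n\<close> assms(2)] unfolding step_def transition_def by blast
qed

lemma travelling_box_tour:
  assumes "2 \<le> n" and "n < L"
  shows "(step L n)\<^sup>*\<^sup>* (rotate (L - 1) (canon L n)) (canon L n)"
proof -
  have "(step L n)\<^sup>*\<^sup>* (travelling_box L n 0) (travelling_box L n j)" if "j \<le> n - 1" for j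
    using that
  proof (induction j)
    case (Suc j)
    then show ?case
      using travelling_box_step[OF _ assms(2), of j] by (simp add: rtranclp.rtrancl_into_rtrancl)
  qed simp
  from this[OF order_refl] have "(step L n)\<^sup>*\<^sup>* (travelling_box L n 0) (canon L n)"
    using travelling_box_last_step[OF assms] by (rule rtranclp.rtrancl_into_rtrancl)
  moreover define P where "P = map Bul [0..<n] @ replicate (L - n - 1) (Box 0)"
  then have "canon L n = P @ [Box 0]" and "length P = L - 1"
    using assms(2) by (simp_all add: canon_def replicate_append_same[symmetric] Suc_diff_Suc[symmetric])
  then have "rotate (L - 1) (canon L n) = [Box 0] @ P"
    using rotate_append[of P "[Box 0]"] by simp
  then have "rotate (L - 1) (canon L n) = travelling_box L n 0"
    by (simp add: travelling_box_def P_def)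
  ultimately show ?thesis by simp
qed

lemma canon_reaches_rotations:
  assumes "2 \<le> n" and "n < L"
  shows "(step L n)\<^sup>*\<^sup>* (rotate s (canon L n)) (canon L n)"
proof -
  have len: "length (canon L n) = L"
    using assms(2) by (simp add: canon_def)
  have "rotate (Suc u) (rotate (L - 1) (canon L n)) = rotate u (canon L n)" for u
  proof -
    have "rotate (Suc u) (rotate (L - 1) (canon L n)) = rotate (u + L) (canon L n)"
      using assms(2) by (simp add: rotate_rotate)
    also have "\<dots> = rotate u (rotate L (canon L n))"
      by (simp only: rotate_rotate)
    finally show ?thesis
      using len by simp
  qed
  then have one: "(step L n)\<^sup>*\<^sup>* (rotate u (canon L n)) (rotate (Suc u) (canon L n))" for u
    using reach_rotate[OF travelling_box_tour[OF assms], of "Suc u"] by simp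
  have "(step L n)\<^sup>*\<^sup>* (rotate s (canon L n)) (rotate (s + t) (canon L n))" for t
  proof (induction t)
    case (Suc t)
    then show ?case
      using one[of "s + t"] by (simp only: add_Suc_right rtranclp_trans)
  qed simp
  moreover have "rotate (s + (L - s mod L)) (canon L n) = canon L n"
    using rotate_cancel[OF len, of s] by (simp only: rotate_rotate add.commute)
  ultimately show ?thesis
    by metis
qed

lemma Omega_reaches_canon:
  assumes "2 \<le> n" and "n < L" and "w \<in> Omega L n"
  shows "(step L n)\<^sup>*\<^sup>* w (canon L n)"
proof -
  obtain s G where w: "w = rotate s (config n G)"
    using Omega_eq_rotate_config[OF assms(3)] assms(1) by auto
  then have "config n G \<in> Omega L n"
    using assms(3) Omega_rotate_iff by blast
  then obtain t where t: "(step L n)\<^sup>*\<^sup>* (config n G) (rotate t (canon L n))"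
    using reach_rot_canon[OF assms(1)] unfolding reach_rot_def by blast
  have "(step L n)\<^sup>*\<^sup>* w (rotate (s + t) (canon L n))"
    using reach_rotate[OF t, of s] w by (simp add: rotate_rotate)
  then show ?thesis
    using canon_reaches_rotations[OF assms(1,2)] by (rule rtranclp_trans)
qed

lemma stationary_iff_stationary_on: "stationary L n p q \<pi> \<longleftrightarrow> stationary_on (Omega L n) (rate n p q) \<pi>"
  unfolding stationary_def stationary_on_def balanced_def by blast

lemma ex1_stationary:
  assumes "2 \<le> n" and "n < L" and "\<forall>k<n. 0 < p k" and "\<forall>k<n. 0 < q k"
  shows "\<exists>!\<pi>. stationary L n p q \<pi>"
proof -
  have "step L n \<le> positive_rate (Omega L n) (rate n p q)"
    using step_Omega rate_pos_if_transition[OF assms(3,4)] unfolding step_def by blast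
  then have "(positive_rate (Omega L n) (rate n p q))\<^sup>*\<^sup>* w (canon L n)" if "w \<in> Omega L n" for w
    using Omega_reaches_canon[OF assms(1,2) that] rtranclp_mono by blast
  then interpret unichain "Omega L n" "rate n p q" "canon L n"
    using finite_Omega rate_nonneg[OF assms(3,4)] canon_Omega[OF _ assms(2)] assms(1) by unfold_locales auto
  show ?thesis
    using ex1_stationary_on by (simp add: stationary_iff_stationary_on)
qed

lemma stat_dist_stationary:
  assumes "2 \<le> n" and "n < L" and "\<forall>k<n. 0 < p k" and "\<forall>k<n. 0 < q k"
  shows "stationary L n p q (stat_dist L n p q)"
  unfolding stat_dist_def using ex1_stationary[OF assms] by (rule theI')

lemma stat_dist_eqI:
  assumes "2 \<le> n" and "n < L" and "\<forall>k<n. 0 < p k" and "\<forall>k<n. 0 < q k"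
    and "stationary L n p q \<pi>"
  shows "stat_dist L n p q = \<pi>"
  using ex1_stationary[OF assms(1-4)] assms(5) unfolding stat_dist_def by (blast intro: the1_equality)

section \<open>Cyclic relabelling\<close>

text \<open>Outside \<open>{..<n}\<close> the shift is the identity, so that relabelling by it is a bijection
  on all letters.\<close>
definition shift_label :: "nat \<Rightarrow> nat \<Rightarrow> nat" where
  "shift_label n k = (if k < n then nxt n k else k)"

definition unshift_label :: "nat \<Rightarrow> nat \<Rightarrow> nat" where
  "unshift_label n k = (if k < n then prv n k else k)"

lemma unshift_shift_label [simp]: "unshift_label n (shift_label n k) = k"
  unfolding shift_label_def unshift_label_def using prv_nxt nxt_less by auto

lemma shift_unshift_label [simp]: "shift_label n (unshift_label n k) = k"
  unfolding shift_label_def unshift_label_def using nxt_prv prv_less by auto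

lemma shift_label_less: "k < n \<Longrightarrow> shift_label n k < n"
  unfolding shift_label_def using nxt_less by auto

lemma unshift_label_less: "k < n \<Longrightarrow> unshift_label n k < n"
  unfolding unshift_label_def using prv_less by auto

lemma shift_label_prv: "k < n \<Longrightarrow> shift_label n (prv n k) = prv n (shift_label n k)"
  unfolding shift_label_def using nxt_prv prv_nxt prv_less nxt_less by auto

lemma shift_label_nxt: "k < n \<Longrightarrow> shift_label n (nxt n k) = nxt n (shift_label n k)"
  unfolding shift_label_def using nxt_less by auto

lemma map_shift_label_upt: "0 < n \<Longrightarrow> map (shift_label n) [0..<n] = rotate 1 [0..<n]"
proof (rule nth_equalityI)
  fix i assume "0 < n" and "i < length (map (shift_label n) [0..<n])"
  then have "i < n" by simp
  then have "rotate 1 [0..<n] ! i = (i + 1) mod n"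
    using nth_rotate[of i "[0..<n]" 1] by (simp add: add.commute)
  then show "map (shift_label n) [0..<n] ! i = rotate 1 [0..<n] ! i"
    using \<open>i < n\<close> by (simp add: shift_label_def nxt_def)
qed simp

lemma map_unshift_label_upt: "0 < n \<Longrightarrow> map (unshift_label n) [0..<n] = rotate (n - 1) [0..<n]"
  by (rule nth_equalityI) (simp_all add: nth_rotate unshift_label_def prv_def add.commute)

abbreviation shift_word :: "nat \<Rightarrow> letter list \<Rightarrow> letter list" where
  "shift_word n \<equiv> map (relabel (shift_label n))"

abbreviation unshift_word :: "nat \<Rightarrow> letter list \<Rightarrow> letter list" where
  "unshift_word n \<equiv> map (relabel (unshift_label n))"

lemma relabel_unshift_shift [simp]: "relabel (unshift_label n) (relabel (shift_label n) x) = x"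
  by (cases x) auto

lemma relabel_shift_unshift [simp]: "relabel (shift_label n) (relabel (unshift_label n) x) = x"
  by (cases x) auto

lemma unshift_shift_word [simp]: "unshift_word n (shift_word n w) = w"
  by (simp add: comp_def)

lemma shift_unshift_word [simp]: "shift_word n (unshift_word n w) = w"
  by (simp add: comp_def)

lemma shift_word_in_Omega: "0 < n \<Longrightarrow> w \<in> Omega L n \<Longrightarrow> shift_word n w \<in> Omega L n"
  using Omega_relabel[OF _ shift_label_less map_shift_label_upt] by blast

lemma unshift_word_in_Omega: "0 < n \<Longrightarrow> w \<in> Omega L n \<Longrightarrow> unshift_word n w \<in> Omega L n"
  using Omega_relabel[OF _ unshift_label_less map_unshift_label_upt] by blast

lemma shift_word_in_Omega_iff: "0 < n \<Longrightarrow> shift_word n w \<in> Omega L n \<longleftrightarrow> w \<in> Omega L n"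
  by (metis shift_word_in_Omega unshift_word_in_Omega unshift_shift_word)

lemma bij_betw_shift_word: "0 < n \<Longrightarrow> bij_betw (shift_word n) (Omega L n) (Omega L n)"
  by (rule bij_betw_byWitness[where f' = "unshift_word n"])
    (auto simp: shift_word_in_Omega unshift_word_in_Omega simp del: map_map)

lemma T_shift_iff:
  assumes "k < n"
  shows "T1 n k w w' \<longleftrightarrow> T1 n (shift_label n k) (shift_word n w) (shift_word n w')"
    and "T2 n k w w' \<longleftrightarrow> T2 n (shift_label n k) (shift_word n w) (shift_word n w')"
    and "T3 n k w w' \<longleftrightarrow> T3 n (shift_label n k) (shift_word n w) (shift_word n w')"
    and "T4 n k w w' \<longleftrightarrow> T4 n (shift_label n k) (shift_word n w) (shift_word n w')"
proof -
  have transport: "X k w w' \<longleftrightarrow> X (shift_label n k) (shift_word n w) (shift_word n w')"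
    if "\<And>v v'. X k v v' \<Longrightarrow> X (shift_label n k) (shift_word n v) (shift_word n v')"
      and "\<And>v v'. X (shift_label n k) v v' \<Longrightarrow> X k (unshift_word n v) (unshift_word n v')"
    for X :: "nat \<Rightarrow> letter list \<Rightarrow> letter list \<Rightarrow> bool"
    using that by (metis unshift_shift_word)
  have inj: "inj (shift_label n)" "inj (unshift_label n)"
    by (metis injI unshift_shift_label, metis injI shift_unshift_label)
  have "unshift_label n (prv n (shift_label n k)) = prv n (unshift_label n (shift_label n k))"
    "unshift_label n (nxt n (shift_label n k)) = nxt n (unshift_label n (shift_label n k))"
    by (metis assms shift_label_prv shift_label_nxt unshift_shift_label)+
  note backward = T2_relabel[OF this(1)] T4_relabel[OF this(2)]
    T1_relabel[OF inj(2), of n "shift_label n k"] T3_relabel[OF inj(2), of n "shift_label n k"]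
  show "T1 n k w w' \<longleftrightarrow> T1 n (shift_label n k) (shift_word n w) (shift_word n w')"
    by (rule transport) (use T1_relabel[OF inj(1)] backward in simp_all)
  show "T2 n k w w' \<longleftrightarrow> T2 n (shift_label n k) (shift_word n w) (shift_word n w')"
    by (rule transport) (use T2_relabel[OF shift_label_prv[OF assms]] backward in simp_all)
  show "T3 n k w w' \<longleftrightarrow> T3 n (shift_label n k) (shift_word n w) (shift_word n w')"
    by (rule transport) (use T3_relabel[OF inj(1)] backward in simp_all)
  show "T4 n k w w' \<longleftrightarrow> T4 n (shift_label n k) (shift_word n w) (shift_word n w')"
    by (rule transport) (use T4_relabel[OF shift_label_nxt[OF assms]] backward in simp_all)
qed

lemma rate_shift:
  assumes "0 < n"
  shows "rate n (\<lambda>j. p ((j + 1) mod n)) (\<lambda>j. q ((j + 1) mod n)) w w'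
       = rate n p q (shift_word n w) (shift_word n w')"
proof -
  define summand where "summand k =
      (if T1 n k (shift_word n w) (shift_word n w') then p k else 0)
    + (if T2 n k (shift_word n w) (shift_word n w') then p k else 0)
    + (if T3 n k (shift_word n w) (shift_word n w') then q k else 0)
    + (if T4 n k (shift_word n w) (shift_word n w') then q k else 0)" for k
  have "bij_betw (shift_label n) {..<n} {..<n}"
    by (rule bij_betw_byWitness[where f' = "unshift_label n"])
      (auto simp: shift_label_less unshift_label_less)
  have "rate n (\<lambda>j. p ((j + 1) mod n)) (\<lambda>j. q ((j + 1) mod n)) w w' = (\<Sum>k<n. summand (shift_label n k))"
    unfolding rate_def
  proof (rule sum.cong)
    fix k assume "k \<in> {..<n}"
    then have "k < n" by simp
    then show "(if T1 n k w w' then p ((k + 1) mod n) else 0) + (if T2 n k w w' then p ((k + 1) mod n) else 0)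
      + (if T3 n k w w' then q ((k + 1) mod n) else 0) + (if T4 n k w w' then q ((k + 1) mod n) else 0)
      = summand (shift_label n k)"
      unfolding summand_def T_shift_iff[OF \<open>k < n\<close>] by (simp add: shift_label_def nxt_def)
  qed simp
  also have "\<dots> = (\<Sum>k<n. summand k)"
    by (rule sum.reindex_bij_betw) fact
  finally show ?thesis
    unfolding rate_def summand_def .
qed

lemma stationary_shift:
  assumes "0 < n" and "stationary L n p q \<pi>"
  shows "stationary L n (\<lambda>j. p ((j + 1) mod n)) (\<lambda>j. q ((j + 1) mod n)) (\<pi> \<circ> shift_word n)"
proof -
  have "(\<lambda>w w'. rate n p q (shift_word n w) (shift_word n w'))
      = rate n (\<lambda>j. p ((j + 1) mod n)) (\<lambda>j. q ((j + 1) mod n))"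
    by (intro ext) (rule rate_shift[OF assms(1), symmetric])
  then show ?thesis
    using stationary_on_reindex[OF bij_betw_shift_word[OF assms(1)]] assms
    by (metis shift_word_in_Omega_iff stationary_iff_stationary_on)
qed

lemma sum_first_box_shift:
  assumes "i < n" and "n < L"
  shows "(\<Sum>w\<in>{w \<in> Omega L n. w ! 0 = Box i}. f (shift_word n w))
       = (\<Sum>u\<in>{u \<in> Omega L n. u ! 0 = Box ((i + 1) mod n)}. f u)"
proof (rule sum.reindex_bij_betw)
  have "shift_label n i = (i + 1) mod n"
    using assms(1) by (simp add: shift_label_def nxt_def)
  moreover have "0 < length w" if "w \<in> Omega L n" for w
    using that assms(2) by (simp add: Omega_iff)
  ultimately show "bij_betw (shift_word n) {w \<in> Omega L n. w ! 0 = Box i}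
      {u \<in> Omega L n. u ! 0 = Box ((i + 1) mod n)}"
    using assms
    by (intro bij_betw_byWitness[where f' = "unshift_word n"])
      (auto simp: shift_word_in_Omega unshift_word_in_Omega simp del: map_map, metis unshift_shift_label)
qed

theorem proposition6p2:
  fixes L n i :: nat and p q :: "nat \<Rightarrow> real"
  assumes "1 \<le> n" and "n < L"
    and "\<forall>k<n. 0 < p k" and "\<forall>k<n. 0 < q k"
    and "i < n"
  shows "box_density L n (\<lambda>j. p ((j + 1) mod n)) (\<lambda>j. q ((j + 1) mod n)) i
         = box_density L n p q ((i + 1) mod n)"
proof (cases "n = 1")
  \<comment> \<open>Here uniqueness fails (there are no transitions), but the shift does not change the rates.\<close>
  case True
  have "rate n (\<lambda>j. p ((j + 1) mod n)) (\<lambda>j. q ((j + 1) mod n)) = rate n p q"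
    using True by (simp add: rate_def fun_eq_iff)
  moreover have "(i + 1) mod n = i"
    using True assms(5) by simp
  ultimately show ?thesis
    unfolding box_density_def stat_dist_def stationary_def by (simp only:)
next
  case False
  then have "2 \<le> n" "0 < n" using assms(1) by simp_all
  have "\<forall>k<n. 0 < p ((k + 1) mod n)" "\<forall>k<n. 0 < q ((k + 1) mod n)"
    using assms(3,4) \<open>0 < n\<close> by simp_all
  moreover have "stationary L n (\<lambda>j. p ((j + 1) mod n)) (\<lambda>j. q ((j + 1) mod n))
      (stat_dist L n p q \<circ> shift_word n)"
    using stationary_shift[OF \<open>0 < n\<close> stat_dist_stationary[OF \<open>2 \<le> n\<close> assms(2-4)]] .
  ultimately have "stat_dist L n (\<lambda>j. p ((j + 1) mod n)) (\<lambda>j. q ((j + 1) mod n))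
      = stat_dist L n p q \<circ> shift_word n"
    by (rule stat_dist_eqI[OF \<open>2 \<le> n\<close> assms(2)])
  then show ?thesis
    unfolding box_density_def comp_def by (rule ssubst) (rule sum_first_box_shift[OF assms(5,2)])
qed

end
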